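(* Let $n\ge 2$ and $\alpha_1,\dots,\alpha_n\in\mathbb{R}$. (a) Let $D$ be the $n\times n$ Euclidean distance matrix of the points $\alpha_1\mathbf{e}_1,\dots,\alpha_n\mathbf{e}_n\in\mathbb{R}^n$ (an axis simplex), i.e. $D_{ij}=\sqrt{\alpha_i^2+\alpha_j^2}$ for $i\neq j$. (b) Let $D'$ be the $(n+1)\times(n+1)$ distance matrix of the points $\mathbf{0},\alpha_1\mathbf{e}_1,\dots,\alpha_n\mathbf{e}_n$ (a simplex with an orthogonal corner), i.e. $D'_{ij}=\sqrt{\alpha_i^2+\alpha_j^2}$ for $i\ne j\in\{0,\dots,n\}$ with $\alpha_0=0$. Assume in each case that the off-diagonal entries are pairwise distinct. Then for every $k>0$ and all $t\in[0,1]$, the $k$-th Betti curve of $D$ (resp. $D'$) is identically zero.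
   Context: Betti curves of a symmetric matrix. Let $M$ be a real symmetric $n\times n$ matrix whose $\binom{n}{2}$ off-diagonal entries $M_{ij}$ ($i<j$) are pairwise distinct. The ordering matrix $\widehat{M}$ is defined by $\widehat{M}_{ij}=k$ if $M_{ij}$ is the $k$-th smallest off-diagonal entry. For $t\in[0,1]$, $G_t=G_t(M)$ is the graph on vertex set $\{1,\dots,n\}$ with edge set $\{\{i,j\} : \widehat{M}_{ij}\le t\binom{n}{2}\}$ (so edges are added in increasing order of the entries $M_{ij}$; $G_0$ has no edges and $G_1$ is complete). $X(G_t)$ is the clique complex of $G_t$ (every $k$-clique of $G_t$ is filled in by a $(k-1)$-dimensional simplex). The $i$-th Betti curve of $M$ is $\beta_i(t)=\operatorname{rank} H_i(X(G_t);\mathbf{k})$, with $H_i$ simplicial homology with coefficients in a fixed field $\mathbf{k}$. $\mathbf{e}_1,\dots,\mathbf{e}_n$ denote the standard basis vectors of $\mathbb{R}^n$. *)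

theory Defs
  imports Complex_Main "HOL-Library.Function_Algebras"
begin

text \<open>Symmetric real matrices are represented as functions nat => nat => real,
  restricted to a finite vertex (index) set V.\<close>

definition offdiag_distinct :: "nat set \<Rightarrow> (nat \<Rightarrow> nat \<Rightarrow> real) \<Rightarrow> bool" where
  "offdiag_distinct V M \<longleftrightarrow> inj_on (\<lambda>(i,j). M i j) {(i,j). i \<in> V \<and> j \<in> V \<and> i < j}"

definition ordering_matrix :: "nat set \<Rightarrow> (nat \<Rightarrow> nat \<Rightarrow> real) \<Rightarrow> nat \<Rightarrow> nat \<Rightarrow> nat" where
  "ordering_matrix V M i j = card {(a,b). a \<in> V \<and> b \<in> V \<and> a < b \<and> M a b \<le> M i j}"

definition Gt_edge :: "nat set \<Rightarrow> (nat \<Rightarrow> nat \<Rightarrow> real) \<Rightarrow> real \<Rightarrow> nat \<Rightarrow> nat \<Rightarrow> bool" where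
  "Gt_edge V M t i j \<longleftrightarrow> i \<in> V \<and> j \<in> V \<and> i \<noteq> j \<and>
     real (ordering_matrix V M i j) \<le> t * real (card V choose 2)"

definition clique_simplices :: "nat set \<Rightarrow> (nat \<Rightarrow> nat \<Rightarrow> bool) \<Rightarrow> nat \<Rightarrow> nat set set" where
  "clique_simplices V E q = {S. S \<subseteq> V \<and> card S = q + 1 \<and> (\<forall>i\<in>S. \<forall>j\<in>S. i \<noteq> j \<longrightarrow> E i j)}"

text \<open>Simplicial q-chains with coefficients in a field 'f (simplices oriented by
  the natural order of the vertices).\<close>
definition chains :: "'f::field itself \<Rightarrow> nat set \<Rightarrow> (nat \<Rightarrow> nat \<Rightarrow> bool) \<Rightarrow> nat \<Rightarrow> (nat set \<Rightarrow> 'f) set" where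
  "chains _ V E q = {c. \<forall>S. c S \<noteq> 0 \<longrightarrow> S \<in> clique_simplices V E q}"

text \<open>Boundary map d_q : C_q -> C_(q-1), d_0 = 0.
  d(v_0..v_q) = sum_i (-1)^i (v_0..^v_i..v_q).\<close>
definition boundary :: "nat set \<Rightarrow> (nat \<Rightarrow> nat \<Rightarrow> bool) \<Rightarrow> nat \<Rightarrow> (nat set \<Rightarrow> 'f::field) \<Rightarrow> (nat set \<Rightarrow> 'f)" where
  "boundary V E q c = (\<lambda>T. if q = 0 then 0
      else if T \<in> clique_simplices V E (q - 1)
      then (\<Sum>v\<in>V - T. (-1) ^ card {w\<in>T. w < v} * c (insert v T))
      else 0)"

definition cycles :: "'f::field itself \<Rightarrow> nat set \<Rightarrow> (nat \<Rightarrow> nat \<Rightarrow> bool) \<Rightarrow> nat \<Rightarrow> (nat set \<Rightarrow> 'f) set" where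
  "cycles F V E q = {c \<in> chains F V E q. boundary V E q c = 0}"

definition boundaries :: "'f::field itself \<Rightarrow> nat set \<Rightarrow> (nat \<Rightarrow> nat \<Rightarrow> bool) \<Rightarrow> nat \<Rightarrow> (nat set \<Rightarrow> 'f) set" where
  "boundaries F V E q = boundary V E (q + 1) ` chains F V E (q + 1)"

definition betti :: "'f::field itself \<Rightarrow> nat set \<Rightarrow> (nat \<Rightarrow> nat \<Rightarrow> bool) \<Rightarrow> nat \<Rightarrow> nat" where
  "betti F V E q =
     vector_space.dim (\<lambda>(a::'f) (c::nat set \<Rightarrow> 'f). (\<lambda>S. a * c S)) (cycles F V E q)
   - vector_space.dim (\<lambda>(a::'f) (c::nat set \<Rightarrow> 'f). (\<lambda>S. a * c S)) (boundaries F V E q)"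

definition betti_curve :: "'f::field itself \<Rightarrow> nat set \<Rightarrow> (nat \<Rightarrow> nat \<Rightarrow> real) \<Rightarrow> nat \<Rightarrow> real \<Rightarrow> nat" where
  "betti_curve F V M k t = betti F V (Gt_edge V M t) k"

definition axis_dist :: "(nat \<Rightarrow> real) \<Rightarrow> nat \<Rightarrow> nat \<Rightarrow> real" where
  "axis_dist \<alpha> i j = (if i = j then 0 else sqrt ((\<alpha> i)^2 + (\<alpha> j)^2))"

end

theory Submission
  imports Defs
begin

text \<open>Let \<open>v\<close> minimise \<open>\<alpha>\<^sub>v\<^sup>2\<close>. Then \<open>D\<^sub>i\<^sub>v \<le> D\<^sub>i\<^sub>j\<close> for all \<open>i \<noteq> v\<close>, \<open>j \<noteq> i\<close>, so in every
  graph \<open>G\<^sub>t\<close> each non-isolated vertex is adjacent to \<open>v\<close>: apart from isolated points the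
  clique complex is a cone with apex \<open>v\<close>. Coning off chains, \<open>z \<mapsto> v * z\<close>, satisfies
  \<open>\<partial>(v * z) = z\<close> for every cycle \<open>z\<close> of positive degree, so all higher homology vanishes.\<close>

definition orient_sign :: "nat \<Rightarrow> nat set \<Rightarrow> 'f::field" where
  "orient_sign w T = (-1) ^ card {x\<in>T. x < w}"

lemma orient_sign_square: "orient_sign w T * orient_sign w T = (1::'f::field)"
  by (simp add: orient_sign_def flip: power_mult_distrib)

lemma card_less_insert:
  assumes "finite A" "v \<notin> A"
  shows "card {x\<in>insert v A. x < w} = card {x\<in>A. x < (w::nat)} + (if v < w then 1 else 0)"
proof (cases "v < w")
  case True
  then have "{x\<in>insert v A. x < w} = insert v {x\<in>A. x < w}" by auto
  then show ?thesis using assms True by simp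
next
  case False
  then have "{x\<in>insert v A. x < w} = {x\<in>A. x < w}" by auto
  then show ?thesis using False by simp
qed

lemma orient_sign_insert_swap:
  assumes "finite A" "v \<notin> A" "w \<notin> A" "v \<noteq> w"
  shows "orient_sign w (insert v A) * orient_sign v (insert w A)
       = - (orient_sign w A * orient_sign v A :: 'f::field)"
  using assms card_less_insert[of A v w] card_less_insert[of A w v]
  by (cases "v < w") (auto simp: orient_sign_def power_add)

lemma boundary_simplex:
  assumes "q > 0" "T \<in> clique_simplices V E (q - 1)"
  shows "boundary V E q c T = (\<Sum>w\<in>V - T. orient_sign w T * c (insert w T))"
  using assms by (simp add: boundary_def orient_sign_def)

text \<open>The apex need not be adjacent to isolated vertices: these only contribute to \<open>H\<^sub>0\<close>.\<close>

locale clique_cone =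
  fixes V :: "nat set" and E :: "nat \<Rightarrow> nat \<Rightarrow> bool" and v :: nat
  assumes finite_V: "finite V" and apex_in_V: "v \<in> V"
    and edge_sym: "E x y \<Longrightarrow> E y x"
    and edge_to_apex: "E x y \<Longrightarrow> x \<noteq> v \<Longrightarrow> E x v"
begin

abbreviation "CS \<equiv> clique_simplices V E"

lemma insert_apex_clique:
  assumes T: "T \<in> CS p" and "p > 0" and vT: "v \<notin> T"
  shows "insert v T \<in> CS (Suc p)"
proof -
  have TV: "T \<subseteq> V" and cT: "card T = p + 1" and cl: "\<forall>i\<in>T. \<forall>j\<in>T. i \<noteq> j \<longrightarrow> E i j"
    using T by (auto simp: clique_simplices_def)
  have finT: "finite T" using TV finite_V finite_subset by blast
  have "E j v" if jT: "j \<in> T" for j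
  proof -
    have "T \<noteq> {j}" using cT \<open>p > 0\<close> by auto
    then obtain y where "y \<in> T" "y \<noteq> j" using jT by blast
    then have "E j y" using cl jT by auto
    moreover have "j \<noteq> v" using vT jT by blast
    ultimately show ?thesis by (rule edge_to_apex)
  qed
  then show ?thesis
    using TV apex_in_V cT finT vT cl edge_sym by (auto simp: clique_simplices_def)
qed

definition cone :: "nat \<Rightarrow> (nat set \<Rightarrow> 'f::field) \<Rightarrow> nat set \<Rightarrow> 'f" where
  "cone q z S = (if v \<in> S \<and> S \<in> CS (q + 1) then orient_sign v (S - {v}) * z (S - {v}) else 0)"

lemma cone_in_chains: "cone q z \<in> chains TYPE('f::field) V E (q + 1)"
  by (auto simp: chains_def cone_def)

lemma cone_insert_apex:
  assumes z: "z \<in> chains TYPE('f::field) V E q" and "q > 0" and vT: "v \<notin> T"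
  shows "cone q z (insert v T) = orient_sign v T * z T"
proof (cases "T \<in> CS q")
  case True
  then show ?thesis using insert_apex_clique[OF True \<open>q > 0\<close> vT] vT by (simp add: cone_def)
next
  case False
  then have "z T = 0" using z by (auto simp: chains_def)
  then show ?thesis using vT by (simp add: cone_def)
qed

lemma boundary_cone_apex_notin:
  assumes z: "z \<in> chains TYPE('f::field) V E q" and q: "q > 0"
    and S: "S \<in> CS q" and vS: "v \<notin> S"
  shows "boundary V E (q + 1) (cone q z) S = z S"
proof -
  have "boundary V E (q + 1) (cone q z) S = (\<Sum>w\<in>V - S. orient_sign w S * cone q z (insert w S))"
    using S by (simp add: boundary_simplex)
  also have "\<dots> = orient_sign v S * cone q z (insert v S)
      + (\<Sum>w\<in>V - S - {v}. orient_sign w S * cone q z (insert w S))"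
    using apex_in_V vS finite_V by (subst sum.remove[of _ v]) auto
  also have "(\<Sum>w\<in>V - S - {v}. orient_sign w S * cone q z (insert w S)) = 0"
    using vS by (intro sum.neutral) (auto simp: cone_def)
  finally show ?thesis
    using cone_insert_apex[OF z q vS] by (simp add: orient_sign_square flip: mult.assoc)
qed

text \<open>Writing \<open>S = v * A\<close>, the coefficient of \<open>A\<close> in \<open>\<partial>z = 0\<close> expresses \<open>z S\<close> through the
  coefficients of the other faces \<open>w * A\<close>, which are exactly what \<open>\<partial>(v * z)\<close> collects at \<open>S\<close>.\<close>

lemma boundary_cone_apex_in:
  assumes z: "z \<in> cycles TYPE('f::field) V E q" and q: "q > 0"
    and S: "S \<in> CS q" and vS: "v \<in> S"
  shows "boundary V E (q + 1) (cone q z) S = z S"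
proof -
  define A where "A = S - {v}"
  have SA: "S = insert v A" and vA: "v \<notin> A" using vS by (auto simp: A_def)
  have SV: "S \<subseteq> V" and cardS: "card S = q + 1" using S by (auto simp: clique_simplices_def)
  have finA: "finite A" using SV finite_V finite_subset by (auto simp: A_def)
  have zc: "z \<in> chains TYPE('f) V E q" using z by (simp add: cycles_def)
  have "A \<in> CS (q - 1)"
    using S cardS vS finA q by (auto simp: clique_simplices_def A_def)
  then have "0 = (\<Sum>w\<in>V - A. orient_sign w A * z (insert w A))"
    using z q by (simp add: cycles_def boundary_simplex[symmetric])
  also have "V - A = insert v (V - S)" using apex_in_V SA vA by auto
  also have "(\<Sum>w\<in>insert v (V - S). orient_sign w A * z (insert w A))
      = orient_sign v A * z S + (\<Sum>w\<in>V - S. orient_sign w A * z (insert w A))"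
    using finite_V vS SA by (subst sum.insert) auto
  finally have face_sum: "(\<Sum>w\<in>V - S. orient_sign w A * z (insert w A)) = - (orient_sign v A * z S)"
    by (simp add: eq_neg_iff_add_eq_0 add.commute)
  have cone_face: "orient_sign w S * cone q z (insert w S)
      = - (orient_sign v A * (orient_sign w A * z (insert w A)))" if w: "w \<in> V - S" for w
  proof -
    have wA: "w \<notin> A" "v \<noteq> w" using w SA by auto
    have "insert w S = insert v (insert w A)" using SA by auto
    then have "cone q z (insert w S) = orient_sign v (insert w A) * z (insert w A)"
      using cone_insert_apex[OF zc q] wA vA by simp
    then show ?thesis
      using orient_sign_insert_swap[OF finA vA wA(1) wA(2), where 'f='f] SA
      by (simp add: algebra_simps)
  qed
  have "boundary V E (q + 1) (cone q z) S = (\<Sum>w\<in>V - S. orient_sign w S * cone q z (insert w S))"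
    using S by (simp add: boundary_simplex)
  also have "\<dots> = - (orient_sign v A * (\<Sum>w\<in>V - S. orient_sign w A * z (insert w A)))"
    using cone_face by (simp add: sum_distrib_left sum_negf)
  also have "\<dots> = z S"
    unfolding face_sum by (simp add: orient_sign_square flip: mult.assoc)
  finally show ?thesis .
qed

lemma boundary_cone:
  assumes z: "z \<in> cycles TYPE('f::field) V E q" and q: "q > 0"
  shows "boundary V E (q + 1) (cone q z) = z"
proof
  fix S
  have zc: "z \<in> chains TYPE('f) V E q" using z by (simp add: cycles_def)
  show "boundary V E (q + 1) (cone q z) S = z S"
  proof (cases "S \<in> CS q")
    case True
    then show ?thesis
      using boundary_cone_apex_in[OF z q] boundary_cone_apex_notin[OF zc q] by blast
  next
    case False
    then show ?thesis using zc by (auto simp: boundary_def chains_def)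
  qed
qed

lemma cycles_subset_boundaries:
  assumes "q > 0"
  shows "cycles TYPE('f::field) V E q \<subseteq> boundaries TYPE('f) V E q"
  using boundary_cone[OF _ assms] cone_in_chains unfolding boundaries_def by (metis image_eqI subsetI)

end

lemma vector_space_fun: "vector_space (\<lambda>(a::'f::field) (c::'b \<Rightarrow> 'f). (\<lambda>S. a * c S))"
  by (simp add: vector_space_def fun_eq_iff algebra_simps)

lemma sum_fun_apply: "(sum f A) x = (\<Sum>a\<in>A. f a x)"
  by (induction A rule: infinite_finite_induct) auto

lemma (in vector_space) dim_le_dim_if_subset_span:
  assumes "A \<subseteq> span B" "B \<subseteq> span W" "finite W"
  shows "dim A \<le> dim B"
proof -
  obtain C where C: "C \<subseteq> B" "independent C" "B \<subseteq> span C" "card C = dim B"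
    by (rule basis_exists)
  have "finite C"
    using independent_span_bound[OF assms(3) C(2)] C(1) assms(2) by blast
  moreover have "A \<subseteq> span C"
    using assms(1) C(3) span_mono[OF C(3)] by (auto simp: span_span)
  ultimately show ?thesis using dim_le_card C(4) by metis
qed

lemma chains_in_finite_span:
  assumes "finite V"
  obtains W where "finite W"
    and "chains TYPE('f::field) V E q \<subseteq> module.span (\<lambda>(a::'f) c. (\<lambda>S. a * c S)) W"
proof
  interpret vs: vector_space "\<lambda>(a::'f) (c::nat set \<Rightarrow> 'f). (\<lambda>S. a * c S)" by (rule vector_space_fun)
  let ?W = "(\<lambda>S T. if T = S then 1 else 0) ` clique_simplices V E q"
  have fin: "finite (clique_simplices V E q)"
    by (rule finite_subset[of _ "Pow V"]) (use assms in \<open>auto simp: clique_simplices_def\<close>)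
  then show "finite ?W" by simp
  show "chains TYPE('f) V E q \<subseteq> vs.span ?W"
  proof
    fix c assume c: "c \<in> chains TYPE('f) V E q"
    have "c = (\<Sum>S\<in>clique_simplices V E q. (\<lambda>T. c S * (if T = S then 1 else 0)))"
      unfolding fun_eq_iff sum_fun_apply using c fin by (auto simp: chains_def if_distrib cong: if_cong)
    also have "\<dots> \<in> vs.span ?W"
      by (intro vs.span_sum vs.span_scale vs.span_base) auto
    finally show "c \<in> vs.span ?W" .
  qed
qed

lemma betti_eq_0_if_cycles_subset_boundaries:
  assumes "finite V" and cb: "cycles TYPE('f::field) V E q \<subseteq> boundaries TYPE('f) V E q"
  shows "betti TYPE('f) V E q = 0"
proof -
  interpret vs: vector_space "\<lambda>(a::'f) (c::nat set \<Rightarrow> 'f). (\<lambda>S. a * c S)" by (rule vector_space_fun)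
  obtain W where W: "finite W" "chains TYPE('f) V E q \<subseteq> vs.span W"
    using chains_in_finite_span[OF assms(1)] by blast
  have "boundaries TYPE('f) V E q \<subseteq> chains TYPE('f) V E q"
    by (auto simp: boundaries_def chains_def boundary_def split: if_splits)
  then have "vs.dim (cycles TYPE('f) V E q) \<le> vs.dim (boundaries TYPE('f) V E q)"
    using cb W by (intro vs.dim_le_dim_if_subset_span[OF _ _ W(1)]) (auto intro: vs.span_base)
  then show ?thesis by (simp add: betti_def)
qed

lemma ordering_matrix_mono:
  assumes "finite V" "M a b \<le> M c d"
  shows "ordering_matrix V M a b \<le> ordering_matrix V M c d"
  unfolding ordering_matrix_def
  by (rule card_mono, rule finite_subset[of _ "V \<times> V"]) (use assms in auto)

lemma clique_cone_axis_dist: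
  assumes "finite V" and vV: "v \<in> V" and vmin: "\<And>x. x \<in> V \<Longrightarrow> (\<beta> v)\<^sup>2 \<le> (\<beta> x)\<^sup>2"
  shows "clique_cone V (Gt_edge V (axis_dist \<beta>) t) v"
proof
  let ?M = "axis_dist \<beta>"
  have osym: "ordering_matrix V ?M x y = ordering_matrix V ?M y x" for x y
    by (simp add: ordering_matrix_def axis_dist_def add.commute)
  show "Gt_edge V ?M t y x" if "Gt_edge V ?M t x y" for x y
    using that osym by (auto simp: Gt_edge_def)
  show "Gt_edge V ?M t x v" if e: "Gt_edge V ?M t x y" and xv: "x \<noteq> v" for x y
  proof -
    have xy: "x \<in> V" "y \<in> V" "x \<noteq> y" using e by (auto simp: Gt_edge_def)
    have "?M x v \<le> ?M x y" using xy xv vmin[OF xy(2)] by (simp add: axis_dist_def)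
    then have "ordering_matrix V ?M x v \<le> ordering_matrix V ?M x y"
      using assms(1) by (rule ordering_matrix_mono[rotated])
    then show ?thesis using e xv vV by (auto simp: Gt_edge_def)
  qed
qed (use assms in auto)

lemma betti_curve_axis_dist_eq_0:
  assumes "finite V" "V \<noteq> {}" "k > 0"
  shows "betti_curve TYPE('f::field) V (axis_dist \<beta>) k t = 0"
proof -
  obtain v where "is_arg_min (\<lambda>x. (\<beta> x)\<^sup>2) (\<lambda>x. x \<in> V) v"
    using ex_is_arg_min_if_finite[OF assms(1,2)] by blast
  then have "clique_cone V (Gt_edge V (axis_dist \<beta>) t) v"
    using assms(1) by (intro clique_cone_axis_dist) (auto simp: is_arg_min_def not_less)
  then show ?thesis
    unfolding betti_curve_def
    using betti_eq_0_if_cycles_subset_boundaries clique_cone.cycles_subset_boundaries assms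
    by blast
qed

theorem mainTheorem3:
  fixes n :: nat and \<alpha> :: "nat \<Rightarrow> real" and k :: nat and t :: real
  assumes "n \<ge> 2" and "k > 0" and "0 \<le> t" and "t \<le> 1"
  shows "(offdiag_distinct {1..n} (axis_dist \<alpha>) \<longrightarrow>
            betti_curve TYPE('f::field) {1..n} (axis_dist \<alpha>) k t = 0)
       \<and> (offdiag_distinct {0..n} (axis_dist (\<alpha>(0 := 0))) \<longrightarrow>
            betti_curve TYPE('f::field) {0..n} (axis_dist (\<alpha>(0 := 0))) k t = 0)"
  using betti_curve_axis_dist_eq_0[of "{1..n}" k] betti_curve_axis_dist_eq_0[of "{0..n}" k] assms
  by auto

end
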